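(* Let $\mathbb{N}$ be a directed graph on vertices $\{1,\dots,m\}$ and let $\mathcal{J}$ be the set of its arcs, written as double indices $ij$ (meaning the arc from $j$ to $i$), i.e. $\mathcal{J}=\{ij: i\in\{1,\dots,m\},\ j\in\bar{\mathcal{N}}_i\}$ where $\bar{\mathcal{N}}_i$ is the set of $j\neq i$ with an arc from $j$ to $i$. For $ij\in\mathcal{J}$ let $c_{ij}\in\mathbb{R}^{1\times m}$ have entry $-1$ in position $i$, $+1$ in position $j$ and zeros elsewhere, and let $b_i$ be the $i$-th unit vector of $\mathbb{R}^m$. Let $\mathbb{G}$ be the directed graph with vertex set $\mathcal{J}$ and an arc from vertex $ij$ to vertex $kq$ whenever $c_{kq}(sI)^{-1}b_i\neq 0$ (equivalently $c_{kq}b_i\neq 0$). If $\mathbb{N}$ is strongly connected, then $\mathbb{G}$ is strongly connected.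
   Context: $c_{ij}$ is the row of the transpose of the incidence matrix of $\mathbb{N}$ corresponding to the arc from $j$ to $i$. *)

theory Defs
  imports Complex_Main
begin

text \<open>A directed graph on vertices {1..m} is given by its arc set E, a set of pairs
  (tail, head); (j, i) \<in> E means there is an arc from j to i.\<close>

definition strongly_connected :: "'a set \<Rightarrow> ('a \<times> 'a) set \<Rightarrow> bool" where
  "strongly_connected V R \<longleftrightarrow> (\<forall>u\<in>V. \<forall>v\<in>V. (u, v) \<in> (R \<inter> (V \<times> V))\<^sup>*)"

definition Nbar :: "(nat \<times> nat) set \<Rightarrow> nat \<Rightarrow> nat set" where
  "Nbar E i = {j. j \<noteq> i \<and> (j, i) \<in> E}"

definition arcsJ :: "nat \<Rightarrow> (nat \<times> nat) set \<Rightarrow> (nat \<times> nat) set" where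
  "arcsJ m E = {(i, j). i \<in> {1..m} \<and> j \<in> Nbar E i}"

definition cvec :: "nat \<Rightarrow> nat \<Rightarrow> nat \<Rightarrow> real" where
  "cvec i j l = (if l = i then -1 else if l = j then 1 else 0)"

definition bvec :: "nat \<Rightarrow> nat \<Rightarrow> real" where
  "bvec i l = (if l = i then 1 else 0)"

definition rowcol :: "nat \<Rightarrow> (nat \<Rightarrow> real) \<Rightarrow> (nat \<Rightarrow> real) \<Rightarrow> real" where
  "rowcol m c b = (\<Sum>l\<in>{1..m}. c l * b l)"

definition arcsG :: "nat \<Rightarrow> (nat \<times> nat) set \<Rightarrow> ((nat \<times> nat) \<times> (nat \<times> nat)) set" where
  "arcsG m E = {((i, j), (k, q)). (i, j) \<in> arcsJ m E \<and> (k, q) \<in> arcsJ m E \<and>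
                   rowcol m (cvec k q) (bvec i) \<noteq> 0}"

end

(* Since c_kq b_i is the i-th entry of c_kq, the graph G has an arc from ij to kq as soon as
   the head i of the arc ij of N is an endpoint of kq.  Following a walk u = w_0, w_1, ..., w_n = v
   in N, the arcs w_1 w_0, w_2 w_1, ..., w_n w_(n-1) then form a walk in G, which can be entered
   from any arc ub with head u and left towards any arc kv with endpoint v. *)
theory Submission
  imports Defs
begin

lemma rowcol_bvec:
  assumes "i \<in> {1..m}"
  shows "rowcol m c (bvec i) = c i"
proof -
  have "rowcol m c (bvec i) = (\<Sum>l\<in>{1..m}. if i = l then c l else 0)"
    unfolding rowcol_def bvec_def by (intro sum.cong) auto
  also have "\<dots> = c i" using assms by (simp add: sum.delta)
  finally show ?thesis .
qed

lemma arcsJ_iff: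
  "(i, j) \<in> arcsJ m E \<longleftrightarrow> i \<in> {1..m} \<and> j \<noteq> i \<and> (j, i) \<in> E"
  by (auto simp: arcsJ_def Nbar_def)

lemma arcsG_if_head_incident:
  assumes "(i, j) \<in> arcsJ m E" "(k, q) \<in> arcsJ m E" "i = k \<or> i = q"
  shows "((i, j), (k, q)) \<in> arcsG m E"
proof -
  have "i \<in> {1..m}" and "k \<noteq> q" using assms(1,2) by (auto simp: arcsJ_iff)
  then have "rowcol m (cvec k q) (bvec i) \<noteq> 0"
    using assms(3) by (auto simp: rowcol_bvec cvec_def)
  then show ?thesis using assms(1,2) by (auto simp: arcsG_def)
qed

lemma arcsG_walk_if_walk:
  assumes "(u, v) \<in> (E \<inter> {1..m} \<times> {1..m})\<^sup>*" "(u, b) \<in> arcsJ m E" "(k, v) \<in> arcsJ m E"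
  shows "((u, b), (k, v)) \<in> (arcsG m E \<inter> arcsJ m E \<times> arcsJ m E)\<^sup>*"
  using assms
proof (induction arbitrary: k rule: rtrancl_induct)
  case base
  then show ?case by (auto intro: arcsG_if_head_incident)
next
  case (step w z)
  show ?case
  proof (cases "w = z")
    case True
    with step.IH step.prems show ?thesis by blast
  next
    case False
    with step.hyps(2) have wz: "(z, w) \<in> arcsJ m E" by (simp add: arcsJ_iff)
    have "((u, b), (z, w)) \<in> (arcsG m E \<inter> arcsJ m E \<times> arcsJ m E)\<^sup>*"
      using step.IH[OF step.prems(1) wz] .
    moreover have "((z, w), (k, z)) \<in> arcsG m E \<inter> arcsJ m E \<times> arcsJ m E"
      using arcsG_if_head_incident[OF wz step.prems(2)] wz step.prems(2) by simp
    ultimately show ?thesis by (rule rtrancl_into_rtrancl)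
  qed
qed

theorem lemma1:
  fixes m :: nat and E :: "(nat \<times> nat) set"
  assumes "E \<subseteq> {1..m} \<times> {1..m}"
    and "strongly_connected {1..m} E"
  shows "strongly_connected (arcsJ m E) (arcsG m E)"
  unfolding strongly_connected_def
proof (clarify)
  fix u b k v
  assume ub: "(u, b) \<in> arcsJ m E" and kv: "(k, v) \<in> arcsJ m E"
  have "u \<in> {1..m}" "v \<in> {1..m}" using ub kv assms(1) by (auto simp: arcsJ_iff)
  then have "(u, v) \<in> (E \<inter> {1..m} \<times> {1..m})\<^sup>*"
    using assms(2) by (simp add: strongly_connected_def)
  then show "((u, b), (k, v)) \<in> (arcsG m E \<inter> arcsJ m E \<times> arcsJ m E)\<^sup>*"
    using ub kv by (rule arcsG_walk_if_walk)
qed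

end
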